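(* Let $(J,R,\sigma)$ be a generalized complex structure of type $1$ on a real $4$-dimensional Lie algebra $\mathfrak g$, with pure spinor $\rho=(\theta+iJ^*\theta)+(i-\lambda)\omega\wedge(\theta+iJ^*\theta)$ as described in the context. Then $d\rho=0$ (the structure is Calabi–Yau) if and only if $[\mathfrak g,\mathfrak g]\subset\operatorname{Im}R$.
   Context: Let $\mathfrak g$ be a real finite-dimensional Lie algebra, $\Phi(\mathfrak g)=\mathfrak g\oplus\mathfrak g^*$ with the neutral pairing $\langle u+\alpha,v+\beta\rangle=\tfrac12(\alpha(v)+\beta(u))$ and the bracket $[u+\alpha,v+\beta]=[u,v]+\mathrm{ad}_u^t\beta-\mathrm{ad}_v^t\alpha$, where $(\mathrm{ad}_u^t\alpha)(v)=-\alpha([u,v])$. A generalized complex structure on $\mathfrak g$ is an endomorphism $K$ of $\Phi(\mathfrak g)$ with $K^2=-\mathrm{Id}$, $\langle Ka,b\rangle+\langle a,Kb\rangle=0$ for all $a,b$, and vanishing Nijenhuis torsion $N_K(a,b)=[Ka,Kb]-K[Ka,b]-K[a,Kb]+K^2[a,b]$. Writing $K=\begin{pmatrix}J&R\\ \sigma&-J^*\end{pmatrix}$ with $J\in\mathrm{End}(\mathfrak g)$ and skew-symmetric $R:\mathfrak g^*\to\mathfrak g$, $\sigma:\mathfrak g\to\mathfrak g^*$, the triple $(J,R,\sigma)$ is also called a generalized complex structure on $\mathfrak g$; in dimension 4 it is of type 1 if $\operatorname{rank}R=2$. For such a structure, with $\mathfrak h=\operatorname{Im}R$, $\mathfrak p=\ker\sigma$,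 one has $\mathfrak g=\mathfrak h\oplus\mathfrak p$ and $J|_{\mathfrak h}=\lambda\mathrm{Id}$; $\omega\in\wedge^2\mathfrak g^*$ is defined by $\omega(R\xi_1,R\xi_2)=\xi_1(R\xi_2)$ and $i_X\omega=0$ for $X\in\mathfrak p$; $\theta$ is a nonzero element of the annihilator $\mathfrak h^0$. $d$ denotes the Chevalley–Eilenberg differential on $\wedge^\bullet\mathfrak g^*\otimes\mathbb C$. *)

theory Defs
  imports "HOL-Analysis.Analysis"
begin

text \<open>The Lie algebra g is realised on the 4-dimensional real vector space real^4
  (every real 4-dimensional Lie algebra is isomorphic to one of these), with bracket B.
  Elements of g* are linear functionals real^4 => real; Phi(g) = g + g* is represented by
  pairs (u, alpha) with alpha linear.\<close>

type_synonym vec = "real^4"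
type_synonym cov = "real^4 \<Rightarrow> real"
type_synonym phi = "vec \<times> cov"

definition lie_algebra :: "(vec \<Rightarrow> vec \<Rightarrow> vec) \<Rightarrow> bool" where
  "lie_algebra B \<longleftrightarrow> bilinear B \<and> (\<forall>x. B x x = 0) \<and>
     (\<forall>x y z. B x (B y z) + B y (B z x) + B z (B x y) = 0)"

definition lin_dual :: "cov set" where
  "lin_dual = {\<xi>. linear \<xi>}"

definition Phi :: "phi set" where
  "Phi = {(u, \<alpha>). linear \<alpha>}"

definition padd :: "phi \<Rightarrow> phi \<Rightarrow> phi" where
  "padd a b = (fst a + fst b, \<lambda>w. snd a w + snd b w)"

definition pneg :: "phi \<Rightarrow> phi" where
  "pneg a = (- fst a, \<lambda>w. - snd a w)"

definition psub :: "phi \<Rightarrow> phi \<Rightarrow> phi" where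
  "psub a b = padd a (pneg b)"

definition pzero :: phi where
  "pzero = (0, \<lambda>w. 0)"

definition pairing :: "phi \<Rightarrow> phi \<Rightarrow> real" where
  "pairing a b = (snd a (fst b) + snd b (fst a)) / 2"

definition adt :: "(vec \<Rightarrow> vec \<Rightarrow> vec) \<Rightarrow> vec \<Rightarrow> cov \<Rightarrow> cov" where
  "adt B u \<alpha> = (\<lambda>v. - \<alpha> (B u v))"

definition pbracket :: "(vec \<Rightarrow> vec \<Rightarrow> vec) \<Rightarrow> phi \<Rightarrow> phi \<Rightarrow> phi" where
  "pbracket B a b = (B (fst a) (fst b), \<lambda>w. adt B (fst a) (snd b) w - adt B (fst b) (snd a) w)"

text \<open>K = [[J, R], [sigma, -J^*]], with (J^* alpha)(v) = alpha(J v)\<close>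
definition Kmat :: "(vec \<Rightarrow> vec) \<Rightarrow> (cov \<Rightarrow> vec) \<Rightarrow> (vec \<Rightarrow> cov) \<Rightarrow> phi \<Rightarrow> phi" where
  "Kmat J R \<sigma> a = (J (fst a) + R (snd a), \<lambda>v. \<sigma> (fst a) v - snd a (J v))"

definition nijenhuis :: "(vec \<Rightarrow> vec \<Rightarrow> vec) \<Rightarrow> (phi \<Rightarrow> phi) \<Rightarrow> phi \<Rightarrow> phi \<Rightarrow> phi" where
  "nijenhuis B K a b =
     padd (psub (psub (pbracket B (K a) (K b)) (K (pbracket B (K a) b))) (K (pbracket B a (K b))))
          (K (K (pbracket B a b)))"

definition gen_complex :: "(vec \<Rightarrow> vec \<Rightarrow> vec) \<Rightarrow> (vec \<Rightarrow> vec) \<Rightarrow> (cov \<Rightarrow> vec) \<Rightarrow> (vec \<Rightarrow> cov) \<Rightarrow> bool" where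
  "gen_complex B J R \<sigma> \<longleftrightarrow>
     linear J \<and>
     (\<forall>\<xi>\<in>lin_dual. \<forall>\<eta>\<in>lin_dual. \<forall>a b::real. R (\<lambda>v. a * \<xi> v + b * \<eta> v) = a *\<^sub>R R \<xi> + b *\<^sub>R R \<eta>) \<and>
     bilinear \<sigma> \<and>
     (\<forall>\<xi>\<in>lin_dual. \<forall>\<eta>\<in>lin_dual. \<xi> (R \<eta>) = - \<eta> (R \<xi>)) \<and>
     (\<forall>u v. \<sigma> u v = - \<sigma> v u) \<and>
     (\<forall>a\<in>Phi. Kmat J R \<sigma> (Kmat J R \<sigma> a) = pneg a) \<and>
     (\<forall>a\<in>Phi. \<forall>b\<in>Phi. pairing (Kmat J R \<sigma> a) b + pairing a (Kmat J R \<sigma> b) = 0) \<and>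
     (\<forall>a\<in>Phi. \<forall>b\<in>Phi. nijenhuis B (Kmat J R \<sigma>) a b = pzero)"

definition type1 :: "(cov \<Rightarrow> vec) \<Rightarrow> bool" where
  "type1 R \<longleftrightarrow> dim (R ` lin_dual) = 2"

text \<open>Complex forms on g are represented as complex-valued alternating multilinear maps.
  Chevalley--Eilenberg differential on 1-forms and 3-forms:
  d alpha(x0,...,xk) = sum_{i<j} (-1)^(i+j) alpha([xi,xj], x0,..^..^..,xk).\<close>
definition ce_d1 :: "(vec \<Rightarrow> vec \<Rightarrow> vec) \<Rightarrow> (vec \<Rightarrow> complex) \<Rightarrow> vec \<Rightarrow> vec \<Rightarrow> complex" where
  "ce_d1 B \<alpha> x0 x1 = - \<alpha> (B x0 x1)"

definition ce_d3 :: "(vec \<Rightarrow> vec \<Rightarrow> vec) \<Rightarrow> (vec \<Rightarrow> vec \<Rightarrow> vec \<Rightarrow> complex) \<Rightarrow>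
    vec \<Rightarrow> vec \<Rightarrow> vec \<Rightarrow> vec \<Rightarrow> complex" where
  "ce_d3 B \<beta> x0 x1 x2 x3 =
       \<beta> (B x0 x1) x2 x3 - \<beta> (B x0 x2) x1 x3 + \<beta> (B x0 x3) x1 x2
     + \<beta> (B x1 x2) x0 x3 - \<beta> (B x1 x3) x0 x2 + \<beta> (B x2 x3) x0 x1"

definition wedge21 :: "(vec \<Rightarrow> vec \<Rightarrow> complex) \<Rightarrow> (vec \<Rightarrow> complex) \<Rightarrow> vec \<Rightarrow> vec \<Rightarrow> vec \<Rightarrow> complex" where
  "wedge21 \<omega> \<phi> x y z = \<omega> x y * \<phi> z + \<omega> y z * \<phi> x + \<omega> z x * \<phi> y"

definition spinor1 :: "(vec \<Rightarrow> vec) \<Rightarrow> cov \<Rightarrow> vec \<Rightarrow> complex" where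
  "spinor1 J \<theta> x = complex_of_real (\<theta> x) + \<i> * complex_of_real (\<theta> (J x))"

definition spinor3 :: "(vec \<Rightarrow> vec) \<Rightarrow> real \<Rightarrow> (vec \<Rightarrow> vec \<Rightarrow> real) \<Rightarrow> cov \<Rightarrow>
    vec \<Rightarrow> vec \<Rightarrow> vec \<Rightarrow> complex" where
  "spinor3 J lam \<omega> \<theta> x y z =
     (\<i> - complex_of_real lam) * wedge21 (\<lambda>u v. complex_of_real (\<omega> u v)) (spinor1 J \<theta>) x y z"

text \<open>d rho = 0 for the mixed-degree form rho = spinor1 + spinor3 (componentwise in degrees 2 and 4)\<close>
definition d_rho_zero :: "(vec \<Rightarrow> vec \<Rightarrow> vec) \<Rightarrow> (vec \<Rightarrow> vec) \<Rightarrow> real \<Rightarrow> (vec \<Rightarrow> vec \<Rightarrow> real) \<Rightarrow> cov \<Rightarrow> bool" where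
  "d_rho_zero B J lam \<omega> \<theta> \<longleftrightarrow>
     (\<forall>x0 x1. ce_d1 B (spinor1 J \<theta>) x0 x1 = 0) \<and>
     (\<forall>x0 x1 x2 x3. ce_d3 B (spinor3 J lam \<omega> \<theta>) x0 x1 x2 x3 = 0)"

end

theory Submission
  imports Defs
begin

text \<open>Write \<open>h = Im R\<close>. From \<open>K\<^sup>2 = -1\<close>, \<open>R \<sigma>\<close> acts on \<open>h\<close> as \<open>-(1 + \<lambda>\<^sup>2)\<close>; this produces a
  vector \<open>q \<notin> h\<close> with \<open>\<sigma> q = \<sigma> (J q) = 0\<close>, so \<open>g = h \<oplus> span {q, J q}\<close> and
  \<open>span {q, J q} = ker \<sigma>\<close>. The form \<open>\<phi> = \<theta> + i J\<^sup>* \<theta>\<close> vanishes on \<open>h\<close> and is nonzero and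
  \<open>J\<close>-complex-linear on \<open>span {q, J q}\<close>, so its kernel is exactly \<open>h\<close>; as
  \<open>d\<phi>(x, y) = -\<phi>([x, y])\<close>, the degree-2 part of \<open>d\<rho>\<close> vanishes iff \<open>[g, g] \<subseteq> h\<close>.
  Conversely, if \<open>[g, g] \<subseteq> h\<close>, the Nijenhuis condition on \<open>(X, 0), (u, 0)\<close> with
  \<open>X \<in> ker \<sigma>\<close>, \<open>u \<in> h\<close> shows that \<open>ad X\<close> is trace-free on the symplectic plane \<open>(h, \<omega>)\<close>,
  and this is exactly what makes \<open>d(\<omega> \<and> \<phi>)\<close> vanish on the basis \<open>{J q, q, h\<^sub>1, h\<^sub>2}\<close>.\<close>

lemma linear_spinor1:
  assumes "linear \<theta>" "linear J"
  shows "linear (spinor1 J \<theta>)"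
  unfolding spinor1_def
  by (rule linearI)
    (simp_all add: linear_add[OF assms(1)] linear_add[OF assms(2)] linear_cmul[OF assms(1)]
      linear_cmul[OF assms(2)] algebra_simps, simp add: scaleR_conv_of_real algebra_simps)

lemma bilinear_of_real:
  assumes "bilinear \<omega>"
  shows "bilinear (\<lambda>u v. complex_of_real (\<omega> u v))"
  unfolding bilinear_def
  by (intro conjI allI linearI)
    (simp_all add: bilinear_ladd[OF assms] bilinear_radd[OF assms] bilinear_lmul[OF assms]
      bilinear_rmul[OF assms] scaleR_conv_of_real)

lemma linear_wedge21:
  assumes "bilinear \<omega>" "linear \<phi>"
  shows "linear (\<lambda>x. wedge21 \<omega> \<phi> x y z)" "linear (\<lambda>y. wedge21 \<omega> \<phi> x y z)"
    "linear (\<lambda>z. wedge21 \<omega> \<phi> x y z)"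
  unfolding wedge21_def
  by (rule linearI; simp add: linear_add linear_scale bilinear_ladd bilinear_radd bilinear_lmul
      bilinear_rmul assms algebra_simps)+

lemma linear_spinor3:
  assumes "bilinear \<omega>" "linear \<theta>" "linear J"
  shows "linear (\<lambda>x. spinor3 J lam \<omega> \<theta> x y z)" "linear (\<lambda>y. spinor3 J lam \<omega> \<theta> x y z)"
    "linear (\<lambda>z. spinor3 J lam \<omega> \<theta> x y z)"
proof -
  note w = linear_wedge21[OF bilinear_of_real[OF assms(1)] linear_spinor1[OF assms(2,3)]]
  show "linear (\<lambda>x. spinor3 J lam \<omega> \<theta> x y z)" "linear (\<lambda>y. spinor3 J lam \<omega> \<theta> x y z)"
    "linear (\<lambda>z. spinor3 J lam \<omega> \<theta> x y z)"
    unfolding spinor3_def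
    by (rule linearI; simp add: linear_add[OF w(1)] linear_add[OF w(2)] linear_add[OF w(3)]
        linear_cmul[OF w(1)] linear_cmul[OF w(2)] linear_cmul[OF w(3)] algebra_simps)+
qed

lemma linear_ce_d3:
  fixes \<beta> :: "vec \<Rightarrow> vec \<Rightarrow> vec \<Rightarrow> complex"
  assumes B: "bilinear B"
    and \<beta>: "\<And>y z. linear (\<lambda>x. \<beta> x y z)" "\<And>x z. linear (\<lambda>y. \<beta> x y z)" "\<And>x y. linear (\<lambda>z. \<beta> x y z)"
  shows "linear (\<lambda>x. ce_d3 B \<beta> x x1 x2 x3)" "linear (\<lambda>x. ce_d3 B \<beta> x0 x x2 x3)"
    "linear (\<lambda>x. ce_d3 B \<beta> x0 x1 x x3)" "linear (\<lambda>x. ce_d3 B \<beta> x0 x1 x2 x)"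
proof -
  note \<beta>_lin = linear_add[OF \<beta>(1)] linear_cmul[OF \<beta>(1)] linear_add[OF \<beta>(2)] linear_cmul[OF \<beta>(2)]
    linear_add[OF \<beta>(3)] linear_cmul[OF \<beta>(3)]
  note B_lin = bilinear_ladd[OF B] bilinear_radd[OF B] bilinear_lmul[OF B] bilinear_rmul[OF B]
  show "linear (\<lambda>x. ce_d3 B \<beta> x x1 x2 x3)" "linear (\<lambda>x. ce_d3 B \<beta> x0 x x2 x3)"
    "linear (\<lambda>x. ce_d3 B \<beta> x0 x1 x x3)" "linear (\<lambda>x. ce_d3 B \<beta> x0 x1 x2 x)"
    unfolding ce_d3_def by (rule linearI; simp add: \<beta>_lin B_lin algebra_simps)+
qed

lemma multilinear4_eq_0_on_spanning:
  fixes f :: "'a::real_vector \<Rightarrow> 'a \<Rightarrow> 'a \<Rightarrow> 'a \<Rightarrow> 'b::real_vector"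
  assumes lin: "\<And>x1 x2 x3. linear (\<lambda>x. f x x1 x2 x3)" "\<And>x0 x2 x3. linear (\<lambda>x. f x0 x x2 x3)"
      "\<And>x0 x1 x3. linear (\<lambda>x. f x0 x1 x x3)" "\<And>x0 x1 x2. linear (\<lambda>x. f x0 x1 x2 x)"
    and S: "span S = UNIV"
    and zero: "\<And>a b c d. \<lbrakk>a \<in> S; b \<in> S; c \<in> S; d \<in> S\<rbrakk> \<Longrightarrow> f a b c d = 0"
  shows "f x0 x1 x2 x3 = 0"
proof -
  have x: "x \<in> span S" for x using S by simp
  have "f a b c x = 0" if "a \<in> S" "b \<in> S" "c \<in> S" for a b c x
    using linear_eq_0_on_span[OF lin(4) _ x] zero that by blast
  then have "f a b x y = 0" if "a \<in> S" "b \<in> S" for a b x y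
    using linear_eq_0_on_span[OF lin(3) _ x] that by blast
  then have "f a x y z = 0" if "a \<in> S" for a x y z
    using linear_eq_0_on_span[OF lin(2) _ x] that by blast
  then show ?thesis
    using linear_eq_0_on_span[OF lin(1) _ x] by blast
qed

lemma span_insert_span: "span (insert a (span S)) = span (insert a S)"
  by (simp add: span_insert span_span)

locale gen_complex_structure =
  fixes B :: "vec \<Rightarrow> vec \<Rightarrow> vec" and J :: "vec \<Rightarrow> vec" and R :: "cov \<Rightarrow> vec"
    and \<sigma> :: "vec \<Rightarrow> cov"
  assumes lie_algebra: "lie_algebra B"
    and gen_complex: "gen_complex B J R \<sigma>"
begin

lemma bilinear_B: "bilinear B"
  using lie_algebra unfolding lie_algebra_def by blast

lemma B_self: "B x x = 0"
  using lie_algebra unfolding lie_algebra_def by blast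

lemma B_skew: "B x y = - B y x"
proof -
  have "B (x + y) (x + y) = B x x + B x y + (B y x + B y y)"
    by (simp add: bilinear_ladd[OF bilinear_B] bilinear_radd[OF bilinear_B])
  then show ?thesis by (simp add: B_self eq_neg_iff_add_eq_0)
qed

lemma linear_J: "linear J"
  and R_lincomb: "\<lbrakk>\<xi> \<in> lin_dual; \<eta> \<in> lin_dual\<rbrakk> \<Longrightarrow> R (\<lambda>v. a * \<xi> v + b * \<eta> v) = a *\<^sub>R R \<xi> + b *\<^sub>R R \<eta>"
  and bilinear_sigma: "bilinear \<sigma>"
  and R_skew: "\<lbrakk>\<xi> \<in> lin_dual; \<eta> \<in> lin_dual\<rbrakk> \<Longrightarrow> \<xi> (R \<eta>) = - \<eta> (R \<xi>)"
  and sigma_skew: "\<sigma> u v = - \<sigma> v u"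
  and K_square: "p \<in> Phi \<Longrightarrow> Kmat J R \<sigma> (Kmat J R \<sigma> p) = pneg p"
  and nijenhuis_zero: "\<lbrakk>p \<in> Phi; q \<in> Phi\<rbrakk> \<Longrightarrow> nijenhuis B (Kmat J R \<sigma>) p q = pzero"
  using gen_complex unfolding gen_complex_def by blast+

lemma sigma_in_lin_dual: "\<sigma> u \<in> lin_dual"
  using bilinear_sigma unfolding bilinear_def lin_dual_def by auto

lemma zero_in_lin_dual: "(\<lambda>v. 0) \<in> lin_dual"
  by (simp add: lin_dual_def linear_zero)

lemma R_zero: "R (\<lambda>v. 0) = 0"
  using R_lincomb[OF zero_in_lin_dual zero_in_lin_dual, of 0 0] by simp

lemma R_scale: "\<xi> \<in> lin_dual \<Longrightarrow> R (\<lambda>v. c * \<xi> v) = c *\<^sub>R R \<xi>"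
  using R_lincomb[of \<xi> \<xi> c 0] by simp

lemma lin_dual_lincomb: "\<lbrakk>\<xi> \<in> lin_dual; \<eta> \<in> lin_dual\<rbrakk> \<Longrightarrow> (\<lambda>v. a * \<xi> v + b * \<eta> v) \<in> lin_dual"
  unfolding lin_dual_def mem_Collect_eq
  by (intro linearI) (simp_all add: linear_add linear_cmul algebra_simps)

lemma subspace_image_R: "subspace (R ` lin_dual)"
  unfolding subspace_def
proof (intro conjI ballI allI)
  show "0 \<in> R ` lin_dual"
    using R_zero zero_in_lin_dual by (rule_tac image_eqI[where x = "\<lambda>v. 0"]) auto
next
  fix x y assume "x \<in> R ` lin_dual" "y \<in> R ` lin_dual"
  then obtain \<xi> \<eta> where *: "\<xi> \<in> lin_dual" "\<eta> \<in> lin_dual" "x = R \<xi>" "y = R \<eta>" by blast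
  then have "x + y = R (\<lambda>v. 1 * \<xi> v + 1 * \<eta> v)" using R_lincomb[of \<xi> \<eta> 1 1] by simp
  then show "x + y \<in> R ` lin_dual" using lin_dual_lincomb[OF *(1,2)] by blast
next
  fix c x assume "x \<in> R ` lin_dual"
  then obtain \<xi> where *: "\<xi> \<in> lin_dual" "x = R \<xi>" by blast
  then have "c *\<^sub>R x = R (\<lambda>v. c * \<xi> v + 0 * \<xi> v)" using R_lincomb[of \<xi> \<xi> c 0] by simp
  then show "c *\<^sub>R x \<in> R ` lin_dual" using lin_dual_lincomb[OF *(1,1)] by blast
qed

lemma linear_R_sigma: "linear (\<lambda>x. R (\<sigma> x))"
proof (rule linearI)
  fix x y
  have "\<sigma> (x + y) = (\<lambda>v. 1 * \<sigma> x v + 1 * \<sigma> y v)"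
    by (rule ext) (simp add: bilinear_ladd[OF bilinear_sigma])
  then show "R (\<sigma> (x + y)) = R (\<sigma> x) + R (\<sigma> y)"
    using R_lincomb[OF sigma_in_lin_dual sigma_in_lin_dual, of 1 x 1 y] by simp
next
  fix c x
  have "\<sigma> (c *\<^sub>R x) = (\<lambda>v. c * \<sigma> x v)"
    by (rule ext) (simp add: bilinear_lmul[OF bilinear_sigma])
  then show "R (\<sigma> (c *\<^sub>R x)) = c *\<^sub>R R (\<sigma> x)"
    using R_scale[OF sigma_in_lin_dual] by simp
qed

lemma K_square_vector:
  shows J_square: "J (J u) + R (\<sigma> u) = - u"
    and sigma_J: "\<sigma> (J u) v = \<sigma> u (J v)"
proof -
  have "(u, \<lambda>v. 0) \<in> Phi" by (simp add: Phi_def linear_zero)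
  from K_square[OF this]
  have "J (J u) + R (\<sigma> u) = - u \<and> (\<lambda>v. \<sigma> (J u) v - \<sigma> u (J v)) = (\<lambda>w. 0)"
    by (simp add: Kmat_def pneg_def R_zero)
  then show "J (J u) + R (\<sigma> u) = - u" "\<sigma> (J u) v = \<sigma> u (J v)"
    by (auto dest: fun_cong[where x = v])
qed

lemma K_square_covector:
  assumes "\<xi> \<in> lin_dual"
  shows "\<sigma> (R \<xi>) v + \<xi> (J (J v)) = - \<xi> v"
proof -
  have "(0, \<xi>) \<in> Phi" using assms by (simp add: Phi_def lin_dual_def)
  from K_square[OF this]
  have "(\<lambda>v. \<sigma> (R \<xi>) v + \<xi> (J (J v))) = (\<lambda>w. - \<xi> w)"
    by (simp add: Kmat_def pneg_def linear_0[OF linear_J] bilinear_lzero[OF bilinear_sigma])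
  then show ?thesis by (auto dest: fun_cong[where x = v])
qed

lemma annihilates_image_R:
  assumes "\<xi> \<in> lin_dual" "R \<xi> = 0" "u \<in> R ` lin_dual"
  shows "\<xi> u = 0"
proof -
  obtain \<eta> where "\<eta> \<in> lin_dual" "u = R \<eta>" using assms(3) by blast
  then show ?thesis
    using R_skew[OF assms(1)] assms(1,2) by (simp add: lin_dual_def linear_0)
qed

lemma R_eq_0_if_annihilates:
  assumes "\<xi> \<in> lin_dual" "\<forall>u \<in> R ` lin_dual. \<xi> u = 0"
  shows "R \<xi> = 0"
proof -
  define \<eta> where "\<eta> = (\<lambda>v. inner (R \<xi>) v)"
  have "\<eta> \<in> lin_dual"
    unfolding \<eta>_def lin_dual_def mem_Collect_eq by (rule bounded_linear.linear[OF bounded_linear_inner_right])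
  then have "inner (R \<xi>) (R \<xi>) = - \<xi> (R \<eta>)"
    using R_skew[OF _ assms(1)] by (simp add: \<eta>_def)
  also have "\<xi> (R \<eta>) = 0" using assms(2) \<open>\<eta> \<in> lin_dual\<close> by blast
  finally show ?thesis by simp
qed

end

locale type1_structure = gen_complex_structure +
  fixes lam :: real
  assumes type1: "type1 R"
    and J_on_image_R: "\<forall>x \<in> R ` lin_dual. J x = lam *\<^sub>R x"
begin

abbreviation h :: "vec set" where
  "h \<equiv> R ` lin_dual"

lemma J_h: "x \<in> h \<Longrightarrow> J x = lam *\<^sub>R x"
  using J_on_image_R by blast

lemma J_square_h: "x \<in> h \<Longrightarrow> J (J x) = lam\<^sup>2 *\<^sub>R x"
  using subspace_image_R by (simp add: J_h linear_cmul[OF linear_J] subspace_scale power2_eq_square)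

lemma R_sigma_h:
  assumes "x \<in> h"
  shows "R (\<sigma> x) = - (1 + lam\<^sup>2) *\<^sub>R x"
  using J_square[of x] J_square_h[OF assms] by (simp add: algebra_simps)

lemma R_sigma_eq_0_h: "\<lbrakk>x \<in> h; R (\<sigma> x) = 0\<rbrakk> \<Longrightarrow> x = 0"
proof -
  assume "x \<in> h" "R (\<sigma> x) = 0"
  then have "(1 + lam\<^sup>2) *\<^sub>R x = 0" using R_sigma_h[of x] by (simp only: scaleR_minus_left neg_equal_0_iff_equal)
  moreover have "1 + lam\<^sup>2 \<noteq> 0" using zero_le_power2[of lam] by linarith
  ultimately show "x = 0" by simp
qed

lemma R_sigma_J_eq_0:
  assumes "R (\<sigma> q) = 0"
  shows "R (\<sigma> (J q)) = 0"
proof (rule R_eq_0_if_annihilates[OF sigma_in_lin_dual], intro ballI)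
  fix u assume "u \<in> h"
  then have "\<sigma> (J q) u = lam * \<sigma> q u"
    by (simp add: sigma_J J_h bilinear_rmul[OF bilinear_sigma])
  then show "\<sigma> (J q) u = 0"
    using annihilates_image_R[OF sigma_in_lin_dual assms \<open>u \<in> h\<close>] by simp
qed

text \<open>Since \<open>R \<sigma>\<close> acts on \<open>h\<close> as the nonzero scalar \<open>-(1 + lam\<^sup>2)\<close>, subtracting the
  \<open>h\<close>-component \<open>R (\<sigma> y) / (1 + lam\<^sup>2)\<close> moves any \<open>y \<notin> h\<close> into the kernel of \<open>R \<sigma>\<close>.\<close>
lemma exists_R_sigma_kernel:
  obtains q where "q \<notin> h" "R (\<sigma> q) = 0"
proof -
  have "dim h = 2" using type1 unfolding type1_def .
  then have "h \<noteq> UNIV" by auto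
  then obtain y where y: "y \<notin> h" by blast
  define l where "l = 1 + lam\<^sup>2"
  have "l > 0" unfolding l_def by (simp add: add_pos_nonneg)
  define q where "q = y + (1 / l) *\<^sub>R R (\<sigma> y)"
  have Rh: "R (\<sigma> y) \<in> h" using sigma_in_lin_dual by blast
  have "R (\<sigma> q) = R (\<sigma> y) + (1 / l) *\<^sub>R R (\<sigma> (R (\<sigma> y)))"
    unfolding q_def by (simp add: linear_add[OF linear_R_sigma] linear_cmul[OF linear_R_sigma])
  also have "R (\<sigma> (R (\<sigma> y))) = - l *\<^sub>R R (\<sigma> y)"
    unfolding l_def by (rule R_sigma_h[OF Rh])
  finally have "R (\<sigma> q) = 0" using \<open>l > 0\<close> by simp
  moreover have "q \<notin> h"
  proof
    assume "q \<in> h"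
    then have "q - (1 / l) *\<^sub>R R (\<sigma> y) \<in> h"
      using subspace_image_R Rh by (simp add: subspace_diff subspace_scale)
    then show False using y by (simp add: q_def)
  qed
  ultimately show thesis using that by blast
qed

lemma J_notin_span_insert:
  assumes "q \<notin> h" "R (\<sigma> q) = 0"
  shows "J q \<notin> span (insert q h)"
proof
  assume "J q \<in> span (insert q h)"
  moreover have "span h = h" using subspace_image_R by simp
  ultimately obtain k where k: "J q - k *\<^sub>R q \<in> h"
    by (auto simp: span_insert)
  have "R (\<sigma> (J q - k *\<^sub>R q)) = 0"
    using assms(2) R_sigma_J_eq_0[OF assms(2)] by (simp add: linear_diff[OF linear_R_sigma] linear_cmul[OF linear_R_sigma])
  then have Jq: "J q = k *\<^sub>R q"
    using R_sigma_eq_0_h[OF k] by simp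
  have "- q = J (J q)" using J_square[of q] assms(2) by simp
  also have "\<dots> = (k * k) *\<^sub>R q" by (simp add: Jq linear_cmul[OF linear_J])
  finally have "(k * k + 1) *\<^sub>R q = 0"
    by (metis add.commute neg_eq_iff_add_eq_0 scaleR_add_left scaleR_one)
  moreover have "k * k + 1 \<noteq> 0" using zero_le_square[of k] by linarith
  ultimately have "q = 0" by simp
  then show False using assms(1) subspace_0[OF subspace_image_R] by simp
qed

lemma adapted_basis:
  obtains q h1 h2 where "span {h1, h2} = h" "span {J q, q, h1, h2} = UNIV" "J (J q) = - q"
    "\<forall>v. \<sigma> q v = 0" "\<forall>v. \<sigma> (J q) v = 0"
proof -
  obtain q where q: "q \<notin> h" "R (\<sigma> q) = 0" by (rule exists_R_sigma_kernel)
  have Jq: "R (\<sigma> (J q)) = 0" using R_sigma_J_eq_0[OF q(2)] .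
  obtain Bh where Bh: "Bh \<subseteq> h" "independent Bh" "h \<subseteq> span Bh" "card Bh = dim h"
    by (rule basis_exists)
  moreover have "dim h = 2" using type1 unfolding type1_def .
  ultimately obtain h1 h2 where "Bh = {h1, h2}" by (metis card_2_iff)
  then have h12: "span {h1, h2} = h"
    using Bh subspace_image_R by (metis span_subspace)
  have "q \<notin> span {h1, h2}" "J q \<notin> span (insert q {h1, h2})"
    using q(1) J_notin_span_insert[OF q] span_insert_span[of q "{h1, h2}"] by (simp_all add: h12)
  then have "dim {J q, q, h1, h2} = dim {h1, h2} + 2"
    using dim_insert[of "J q" "{q, h1, h2}"] dim_insert[of q "{h1, h2}"] by simp
  also have "\<dots> = DIM(vec)"
    using type1 dim_span[of "{h1, h2}"] unfolding type1_def h12 by simp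
  finally have spans: "span {J q, q, h1, h2} = UNIV" by (rule dim_eq_full[THEN iffD1])
  have JJ: "J (J q) = - q" using J_square[of q] q(2) by simp
  have hs: "h1 \<in> h" "h2 \<in> h" using h12 span_base[of _ "{h1, h2}"] by auto
  have qJq: "\<sigma> q (J q) = 0" using sigma_J[of q q] sigma_skew[of "J q" q] by simp
  have "\<sigma> q x = 0" if "x \<in> {J q, q, h1, h2}" for x
    using that qJq sigma_skew[of q q] annihilates_image_R[OF sigma_in_lin_dual q(2) hs(1)]
      annihilates_image_R[OF sigma_in_lin_dual q(2) hs(2)] by auto
  moreover have "\<sigma> (J q) x = 0" if "x \<in> {J q, q, h1, h2}" for x
    using that qJq sigma_J[of q q] sigma_skew[of "J q" "J q"] annihilates_image_R[OF sigma_in_lin_dual Jq hs(1)]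
      annihilates_image_R[OF sigma_in_lin_dual Jq hs(2)] by auto
  moreover have "linear (\<sigma> p)" for p using sigma_in_lin_dual by (simp add: lin_dual_def)
  ultimately have "\<sigma> q v = 0" "\<sigma> (J q) v = 0" for v
    using linear_eq_0_on_span spans by (metis UNIV_I)+
  then show thesis using that h12 spans JJ by blast
qed

text \<open>The vector part of \<open>N_K((X, 0), (u, 0)) = 0\<close>.\<close>
lemma nijenhuis_ker_sigma_h:
  assumes X: "\<forall>v. \<sigma> X v = 0" and u: "u \<in> h"
    and brackets: "B X u \<in> h" "B (J X) u \<in> h"
  shows "R (\<lambda>v. - \<sigma> u (B X v)) = - (1 + lam\<^sup>2) *\<^sub>R B X u"
proof -
  let ?K = "Kmat J R \<sigma>"
  have Phi: "(X, \<lambda>v. 0) \<in> Phi" "(u, \<lambda>v. 0) \<in> Phi" "(B X u, \<lambda>w. 0) \<in> Phi"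
    by (simp_all add: Phi_def linear_zero)
  have KX: "?K (X, \<lambda>v. 0) = (J X, \<lambda>v. 0)"
    using X by (simp add: Kmat_def R_zero)
  have Ku: "?K (u, \<lambda>v. 0) = (lam *\<^sub>R u, \<sigma> u)"
    using J_h[OF u] by (simp add: Kmat_def R_zero)
  have KJXu: "?K (B (J X) u, \<lambda>w. 0) = (lam *\<^sub>R B (J X) u, \<sigma> (B (J X) u))"
    using J_h[OF brackets(2)] by (simp add: Kmat_def R_zero)
  have brackets_0: "pbracket B (J X, \<lambda>v. 0) (u, \<lambda>v. 0) = (B (J X) u, \<lambda>w. 0)"
    "pbracket B (X, \<lambda>v. 0) (u, \<lambda>v. 0) = (B X u, \<lambda>w. 0)"
    by (simp_all add: pbracket_def adt_def)
  have "fst (nijenhuis B ?K (X, \<lambda>v. 0) (u, \<lambda>v. 0)) = 0"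
    using nijenhuis_zero[OF Phi(1,2)] by (simp add: pzero_def)
  then have "- J (lam *\<^sub>R B X u) - R (\<lambda>w. - \<sigma> u (B X w)) - B X u = 0"
    unfolding nijenhuis_def KX Ku brackets_0 K_square[OF Phi(3)] KJXu
    by (simp add: pbracket_def adt_def bilinear_rmul[OF bilinear_B] Kmat_def psub_def padd_def pneg_def)
  moreover have "J (lam *\<^sub>R B X u) = lam\<^sup>2 *\<^sub>R B X u"
    using J_h[OF brackets(1)] by (simp add: linear_cmul[OF linear_J] power2_eq_square)
  ultimately have "- (lam\<^sup>2 *\<^sub>R B X u) = B X u + R (\<lambda>w. - \<sigma> u (B X w))"
    by (simp add: algebra_simps)
  then have "R (\<lambda>w. - \<sigma> u (B X w)) = - (lam\<^sup>2 *\<^sub>R B X u) - B X u"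
    by (simp add: eq_diff_eq)
  then show ?thesis by (simp add: scaleR_diff_left)
qed

end

locale type1_spinor = type1_structure +
  fixes \<omega> :: "vec \<Rightarrow> vec \<Rightarrow> real" and \<theta> :: cov
  assumes bilinear_omega: "bilinear \<omega>"
    and omega_skew: "\<omega> x y = - \<omega> y x"
    and omega_R: "\<lbrakk>\<xi>1 \<in> lin_dual; \<xi>2 \<in> lin_dual\<rbrakk> \<Longrightarrow> \<omega> (R \<xi>1) (R \<xi>2) = \<xi>1 (R \<xi>2)"
    and omega_ker_sigma: "\<forall>v. \<sigma> X v = 0 \<Longrightarrow> \<omega> X Y = 0"
    and linear_theta: "linear \<theta>"
    and theta_nonzero: "\<theta> \<noteq> (\<lambda>x. 0)"
    and theta_h: "x \<in> h \<Longrightarrow> \<theta> x = 0"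
begin

lemma sigma_h:
  assumes "u \<in> h" "w \<in> h"
  shows "\<sigma> u w = - (1 + lam\<^sup>2) * \<omega> u w"
proof -
  obtain \<xi> \<eta> where \<xi>: "\<xi> \<in> lin_dual" "u = R \<xi>" and \<eta>: "\<eta> \<in> lin_dual" "w = R \<eta>"
    using assms by blast
  have "\<xi> (J (J w)) = lam\<^sup>2 * \<xi> w"
    using \<xi>(1) J_square_h[OF assms(2)] by (simp add: lin_dual_def linear_cmul)
  then have "\<sigma> u w = - (1 + lam\<^sup>2) * \<xi> w"
    using K_square_covector[OF \<xi>(1), of w] \<xi>(2) by (simp add: algebra_simps)
  then show ?thesis using omega_R \<xi> \<eta> by simp
qed

text \<open>For \<open>X \<in> ker \<sigma>\<close>, the map \<open>u \<mapsto> [X, u]\<close> on \<open>h\<close> is \<open>\<omega>\<close>-skew, i.e.\ trace-free on the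
  plane \<open>h\<close>: pair the Nijenhuis identity with \<open>\<omega>\<close> and use the skew-symmetry of \<open>R\<close>.\<close>
lemma omega_bracket_symmetric:
  assumes X: "\<forall>v. \<sigma> X v = 0" and u: "u \<in> h" and w: "w \<in> h"
    and brackets: "B X u \<in> h" "B (J X) u \<in> h" "B X w \<in> h"
  shows "\<omega> w (B X u) = \<omega> u (B X w)"
proof -
  define l where "l = 1 + lam\<^sup>2"
  have "l > 0" unfolding l_def by (simp add: add_pos_nonneg)
  obtain \<eta> where \<eta>: "\<eta> \<in> lin_dual" "w = R \<eta>" using w by blast
  define \<zeta> where "\<zeta> = (\<lambda>v. - \<sigma> u (B X v))"
  have \<zeta>: "\<zeta> \<in> lin_dual"
    using sigma_in_lin_dual[of u] unfolding \<zeta>_def lin_dual_def mem_Collect_eq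
    by (intro linearI) (simp_all add: bilinear_radd[OF bilinear_B] bilinear_rmul[OF bilinear_B] linear_add linear_cmul)
  have "\<omega> w (R \<zeta>) = \<eta> (R \<zeta>)" using omega_R \<eta> \<zeta> by simp
  also have "\<dots> = \<sigma> u (B X w)" using R_skew[OF \<eta>(1) \<zeta>] \<eta>(2) by (simp add: \<zeta>_def)
  also have "\<dots> = - l * \<omega> u (B X w)" using sigma_h[OF u brackets(3)] by (simp add: l_def)
  finally have "\<omega> w (R \<zeta>) = - l * \<omega> u (B X w)" .
  moreover have "R \<zeta> = - l *\<^sub>R B X u"
    unfolding \<zeta>_def l_def by (rule nijenhuis_ker_sigma_h[OF X u brackets(1,2)])
  ultimately show ?thesis
    using \<open>l > 0\<close> by (simp add: bilinear_rmul[OF bilinear_omega] bilinear_rneg[OF bilinear_omega])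
qed

lemma linear_spinor1_theta: "linear (spinor1 J \<theta>)"
  by (rule linear_spinor1[OF linear_theta linear_J])

lemma spinor1_h: "u \<in> h \<Longrightarrow> spinor1 J \<theta> u = 0"
  using subspace_image_R by (simp add: spinor1_def theta_h J_h subspace_scale)

lemma spinor1_J:
  assumes "J (J q) = - q"
  shows "spinor1 J \<theta> (J q) = - \<i> * spinor1 J \<theta> q"
  using assms by (simp add: spinor1_def linear_neg[OF linear_theta] algebra_simps)

text \<open>The kernel of \<open>\<theta> + i J\<^sup>* \<theta>\<close> is exactly \<open>h\<close>: on the complement \<open>span {q, J q}\<close> this
  form is \<open>J\<close>-complex-linear and nonzero.\<close>
lemma spinor1_eq_0_iff: "spinor1 J \<theta> w = 0 \<longleftrightarrow> w \<in> h"
proof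
  obtain q h1 h2 where h12: "span {h1, h2} = h" and spans: "span {J q, q, h1, h2} = UNIV"
    and JJ: "J (J q) = - q"
    by (rule adapted_basis)
  let ?\<phi> = "spinor1 J \<theta>"
  have \<phi>Jq: "?\<phi> (J q) = - \<i> * ?\<phi> q" by (rule spinor1_J[OF JJ])
  have "?\<phi> q \<noteq> 0"
  proof
    assume "?\<phi> q = 0"
    then have "\<theta> x = 0" if "x \<in> {J q, q, h1, h2}" for x
      using that \<phi>Jq theta_h h12 span_base[of _ "{h1, h2}"]
      by (auto simp: spinor1_def complex_eq_iff)
    then have "\<theta> x = 0" for x
      using linear_eq_0_on_span[OF linear_theta] spans by (metis UNIV_I)
    then show False using theta_nonzero by auto
  qed
  assume "?\<phi> w = 0"
  have "w \<in> span (insert (J q) {q, h1, h2})" using spans by simp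
  then obtain a where "w - a *\<^sub>R J q \<in> span (insert q {h1, h2})"
    unfolding span_insert[of "J q"] by blast
  then obtain b where ab: "w - a *\<^sub>R J q - b *\<^sub>R q \<in> h"
    unfolding span_insert[of q] h12 by blast
  define u where "u = w - a *\<^sub>R J q - b *\<^sub>R q"
  have "?\<phi> w = ?\<phi> u + a *\<^sub>R ?\<phi> (J q) + b *\<^sub>R ?\<phi> q"
    by (simp add: u_def linear_diff[OF linear_spinor1_theta] linear_cmul[OF linear_spinor1_theta])
  also have "\<dots> = (b - \<i> * a) * ?\<phi> q"
    using spinor1_h ab \<phi>Jq by (simp add: u_def scaleR_conv_of_real algebra_simps)
  finally have "b - \<i> * a = 0" using \<open>?\<phi> w = 0\<close> \<open>?\<phi> q \<noteq> 0\<close> by simp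
  then have "a = 0" "b = 0" by (simp_all add: complex_eq_iff)
  then show "w \<in> h" using ab by simp
qed (rule spinor1_h)

lemma ce_d3_spinor3_eq_0:
  assumes brackets: "\<And>x y. B x y \<in> h"
  shows "ce_d3 B (spinor3 J lam \<omega> \<theta>) x0 x1 x2 x3 = 0"
proof -
  obtain q h1 h2 where h12: "span {h1, h2} = h" and spans: "span {J q, q, h1, h2} = UNIV"
    and \<sigma>q: "\<forall>v. \<sigma> q v = 0" "\<forall>v. \<sigma> (J q) v = 0"
    by (rule adapted_basis)
  have hs: "h1 \<in> h" "h2 \<in> h" using h12 span_base[of _ "{h1, h2}"] by auto
  have \<omega>q: "\<omega> q v = 0" "\<omega> (J q) v = 0" "\<omega> v q = 0" "\<omega> v (J q) = 0" for v
    using omega_ker_sigma[OF \<sigma>q(1)] omega_ker_sigma[OF \<sigma>q(2)] omega_skew[of v] by auto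
  have trace_free: "\<omega> (B p h2) h1 = \<omega> (B p h1) h2" if "\<forall>v. \<sigma> p v = 0" for p
    using omega_bracket_symmetric[OF that hs brackets brackets brackets]
      omega_skew[of h2 "B p h1"] omega_skew[of h1 "B p h2"] by linarith
  have \<omega>_h: "\<omega> h1 (B x y) = - \<omega> (B x y) h1" "\<omega> h2 (B x y) = - \<omega> (B x y) h2" for x y
    by (rule omega_skew)+
  have \<omega>_lin: "\<omega> (- x) y = - \<omega> x y" "\<omega> x (- y) = - \<omega> x y" "\<omega> 0 x = 0" "\<omega> x 0 = 0" "\<omega> x x = 0"
    for x y
    using bilinear_lneg[OF bilinear_omega] bilinear_rneg[OF bilinear_omega] bilinear_lzero[OF bilinear_omega]
      bilinear_rzero[OF bilinear_omega] omega_skew[of x x] by auto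
  have \<phi>: "spinor1 J \<theta> h1 = 0" "spinor1 J \<theta> h2 = 0" "spinor1 J \<theta> (B x y) = 0"
    "spinor1 J \<theta> (- x) = - spinor1 J \<theta> x" "spinor1 J \<theta> 0 = 0" for x y
    using spinor1_h hs brackets linear_neg[OF linear_spinor1_theta] linear_0[OF linear_spinor1_theta] by auto
  have B_swap: "B h2 h1 = - B h1 h2" "B h1 q = - B q h1" "B h2 q = - B q h2" "B h1 (J q) = - B (J q) h1"
    "B h2 (J q) = - B (J q) h2" "B (J q) q = - B q (J q)"
    by (rule B_skew)+
  note linear_d = linear_ce_d3[OF bilinear_B linear_spinor3[OF bilinear_omega linear_theta linear_J]]
  show ?thesis
  proof (rule multilinear4_eq_0_on_spanning[OF linear_d spans])
    fix a b c d assume "a \<in> {J q, q, h1, h2}" "b \<in> {J q, q, h1, h2}" "c \<in> {J q, q, h1, h2}" "d \<in> {J q, q, h1, h2}"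
    txt \<open>\<open>\<phi>\<close> kills \<open>h \<supseteq> [g, g]\<close> and \<open>\<omega>\<close> kills \<open>ker \<sigma>\<close>; the surviving terms cancel by
      \<open>trace_free\<close>.\<close>
    then show "ce_d3 B (spinor3 J lam \<omega> \<theta>) a b c d = 0"
      apply (simp only: insert_iff empty_iff simp_thms)
      apply (elim disjE)
      apply (simp_all add: ce_d3_def spinor3_def wedge21_def B_self B_swap \<omega>q \<omega>_h \<omega>_lin \<phi>
          trace_free[OF \<sigma>q(1)] trace_free[OF \<sigma>q(2)])
      done
  qed
qed

lemma d_rho_zero_iff_brackets_h: "d_rho_zero B J lam \<omega> \<theta> \<longleftrightarrow> (\<forall>x y. B x y \<in> h)"
  unfolding d_rho_zero_def ce_d1_def using spinor1_eq_0_iff ce_d3_spinor3_eq_0 by auto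

end

theorem proposition2p3:
  fixes B :: "vec \<Rightarrow> vec \<Rightarrow> vec" and J :: "vec \<Rightarrow> vec" and R :: "cov \<Rightarrow> vec"
    and \<sigma> :: "vec \<Rightarrow> cov" and lam :: real and \<omega> :: "vec \<Rightarrow> vec \<Rightarrow> real" and \<theta> :: cov
  assumes "lie_algebra B"
    and "gen_complex B J R \<sigma>"
    and "type1 R"
    and lam: "\<forall>x \<in> R ` lin_dual. J x = lam *\<^sub>R x"
    and om_bil: "bilinear \<omega>" and om_skew: "\<forall>x y. \<omega> x y = - \<omega> y x"
    and om_R: "\<forall>\<xi>1\<in>lin_dual. \<forall>\<xi>2\<in>lin_dual. \<omega> (R \<xi>1) (R \<xi>2) = \<xi>1 (R \<xi>2)"
    and om_p: "\<forall>X \<in> {X. \<forall>v. \<sigma> X v = 0}. \<forall>Y. \<omega> X Y = 0"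
    and th: "linear \<theta>" "\<theta> \<noteq> (\<lambda>x. 0)" "\<forall>x \<in> R ` lin_dual. \<theta> x = 0"
  shows "d_rho_zero B J lam \<omega> \<theta> \<longleftrightarrow> span {B x y | x y. True} \<subseteq> R ` lin_dual"
proof -
  interpret type1_spinor B J R \<sigma> lam \<omega> \<theta>
    unfolding type1_spinor_def type1_spinor_axioms_def type1_structure_def type1_structure_axioms_def
      gen_complex_structure_def
    using assms by blast
  have "span {B x y | x y. True} \<subseteq> h \<longleftrightarrow> {B x y | x y. True} \<subseteq> h"
    using span_minimal[OF _ subspace_image_R] span_superset by (meson order_trans)
  also have "\<dots> \<longleftrightarrow> (\<forall>x y. B x y \<in> h)" by blast
  finally show ?thesis by (simp only: d_rho_zero_iff_brackets_h)
qed

end
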